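(* Let $m>a\geq0$, $n>b\geq0$, $h\geq0$ be integers with $h\leq (m-a)(n-b)-\max\{m-a,n-b\}$, and let $N=mn$. For any $\mathcal{E}'\in\mathbb{E}^{\max}_{m\times n}(a,b,0)$ and any $[N,k]$ code $\mathcal{C}\in\mathbb{C}^{\mathsf{MR}}_{m\times n}(a,b,h)$, the code $\mathcal{C}|_{([m]\times[n])\setminus\mathcal{E}'}$ (obtained by restricting every codeword to the positions outside $\mathcal{E}'$) is an $[N-|\mathcal{E}'|,k,h+1]$ MDS code.
   Context: Positions of vectors in $\mathbb{F}^{mn}$ are identified with the grid $[m]\times[n]$, where $[k]=\{1,\dots,k\}$. For linear codes $\mathcal{C}_1\subseteq\mathbb{F}^m$, $\mathcal{C}_2\subseteq\mathbb{F}^n$ with generator matrices $\mathbf{G}_1,\mathbf{G}_2$, $\mathcal{C}_1\otimes\mathcal{C}_2$ is the row span of $\mathbf{G}_1\otimes\mathbf{G}_2$. A code for the topology $T_{m\times n}(a,b,h)$ is a linear code over a finite field $\mathbb{F}$ with a parity-check matrix $\begin{pmatrix}\mathbf{H}_{\mathsf{local}}\\ \mathbf{H}_{\mathsf{global}}\end{pmatrix}$, where $\mathbf{H}_{\mathsf{local}}$ is a parity-check matrix of $\mathcal{C}_{\mathsf{col}}\otimes\mathcal{C}_{\mathsf{row}}$ for some linear $[m,\geq m-a]$ code $\mathcal{C}_{\mathsf{col}}$ and $[n,\geq n-b]$ code $\mathcal{C}_{\mathsf{row}}$ over $\mathbb{F}$, and $\mathbf{H}_{\mathsf{global}}$ is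 an arbitrary $h\times mn$ matrix; $\mathbb{C}_{m\times n}(a,b,h)$ is the set of all such codes (over any finite field). A code corrects an erasure pattern $\mathcal{E}\subseteq[m]\times[n]$ if no two distinct codewords agree on all positions outside $\mathcal{E}$. $\mathcal{E}$ is correctable in $T_{m\times n}(a,b,h)$ if some code in $\mathbb{C}_{m\times n}(a,b,h)$ corrects it; $\mathbb{E}_{m\times n}(a,b,h)$ is the set of such patterns, $\mathbb{E}^{\max}_{m\times n}(a,b,h)$ the set of those not properly contained in another correctable pattern. A code in $\mathbb{C}_{m\times n}(a,b,h)$ is maximally recoverable (MR) if it corrects every pattern in $\mathbb{E}_{m\times n}(a,b,h)$; $\mathbb{C}^{\mathsf{MR}}_{m\times n}(a,b,h)$ is the set of MR codes. *)

theory Defs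
  imports "HOL-Algebra.Ring" "HOL-Algebra.Ring_Divisibility"
begin

definition grid :: "nat \<Rightarrow> nat \<Rightarrow> (nat \<times> nat) set" where
  "grid m n = {1..m} \<times> {1..n}"

definition vecs :: "('b, 'm) ring_scheme \<Rightarrow> 'p set \<Rightarrow> ('p \<Rightarrow> 'b) set" where
  "vecs R P = {v. (\<forall>p\<in>P. v p \<in> carrier R) \<and> (\<forall>p. p \<notin> P \<longrightarrow> v p = \<zero>\<^bsub>R\<^esub>)}"

definition lin_code :: "('b, 'm) ring_scheme \<Rightarrow> 'p set \<Rightarrow> ('p \<Rightarrow> 'b) set \<Rightarrow> bool" where
  "lin_code R P C \<longleftrightarrow> C \<subseteq> vecs R P \<and> (\<lambda>p. \<zero>\<^bsub>R\<^esub>) \<in> C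
     \<and> (\<forall>x\<in>C. \<forall>y\<in>C. (\<lambda>p. x p \<oplus>\<^bsub>R\<^esub> y p) \<in> C)
     \<and> (\<forall>c\<in>carrier R. \<forall>x\<in>C. (\<lambda>p. c \<otimes>\<^bsub>R\<^esub> x p) \<in> C)"

text \<open>Dimension over a finite field F_q: a k-dimensional code has q^k codewords.\<close>
definition has_dim :: "('b, 'm) ring_scheme \<Rightarrow> ('p \<Rightarrow> 'b) set \<Rightarrow> nat \<Rightarrow> bool" where
  "has_dim R C k \<longleftrightarrow> card C = card (carrier R) ^ k"

inductive_set lin_span :: "('b, 'm) ring_scheme \<Rightarrow> ('p \<Rightarrow> 'b) set \<Rightarrow> ('p \<Rightarrow> 'b) set"
  for R S where
  zero: "(\<lambda>p. \<zero>\<^bsub>R\<^esub>) \<in> lin_span R S"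
| step: "v \<in> lin_span R S \<Longrightarrow> s \<in> S \<Longrightarrow> c \<in> carrier R \<Longrightarrow>
          (\<lambda>p. (c \<otimes>\<^bsub>R\<^esub> s p) \<oplus>\<^bsub>R\<^esub> v p) \<in> lin_span R S"

text \<open>Tensor product code C1 (x) C2: span of all outer products x y^T
  (= row span of G1 (x) G2 for generator matrices G1, G2).\<close>
definition tensor_code :: "('b, 'm) ring_scheme \<Rightarrow> (nat \<Rightarrow> 'b) set \<Rightarrow> (nat \<Rightarrow> 'b) set
    \<Rightarrow> (nat \<times> nat \<Rightarrow> 'b) set" where
  "tensor_code R C1 C2 = lin_span R {(\<lambda>(i, j). x i \<otimes>\<^bsub>R\<^esub> y j) | x y. x \<in> C1 \<and> y \<in> C2}"

text \<open>Codes for the topology T_{m x n}(a,b,h): kernel of [H_local; H_global], where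
  ker H_local = Ccol (x) Crow and H_global is an arbitrary h x mn matrix.\<close>
definition topo_code :: "('b, 'm) ring_scheme \<Rightarrow> nat \<Rightarrow> nat \<Rightarrow> nat \<Rightarrow> nat \<Rightarrow> nat
    \<Rightarrow> (nat \<times> nat \<Rightarrow> 'b) set \<Rightarrow> bool" where
  "topo_code R m n a b h C \<longleftrightarrow>
    (\<exists>Ccol Crow H.
       lin_code R {1..m} Ccol \<and> (\<exists>k. k \<ge> m - a \<and> has_dim R Ccol k) \<and>
       lin_code R {1..n} Crow \<and> (\<exists>k. k \<ge> n - b \<and> has_dim R Crow k) \<and>
       (\<forall>i<h. \<forall>p\<in>grid m n. H i p \<in> carrier R) \<and>
       C = {c \<in> tensor_code R Ccol Crow.
              \<forall>i<h. (\<Oplus>\<^bsub>R\<^esub>p\<in>grid m n. H i p \<otimes>\<^bsub>R\<^esub> c p) = \<zero>\<^bsub>R\<^esub>})"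

definition corrects :: "nat \<Rightarrow> nat \<Rightarrow> (nat \<times> nat \<Rightarrow> 'b) set \<Rightarrow> (nat \<times> nat) set \<Rightarrow> bool" where
  "corrects m n C E \<longleftrightarrow>
     (\<forall>c1\<in>C. \<forall>c2\<in>C. (\<forall>p\<in>grid m n - E. c1 p = c2 p) \<longrightarrow> c1 = c2)"

text \<open>Correctable in T_{m x n}(a,b,h): some code over some finite field corrects E.
  Every finite field is isomorphic to one whose carrier is a set of naturals.\<close>
definition correctable :: "nat \<Rightarrow> nat \<Rightarrow> nat \<Rightarrow> nat \<Rightarrow> nat \<Rightarrow> (nat \<times> nat) set \<Rightarrow> bool" where
  "correctable m n a b h E \<longleftrightarrow> E \<subseteq> grid m n \<and>
     (\<exists>(F :: nat ring) C. field F \<and> finite (carrier F) \<and> topo_code F m n a b h C \<and> corrects m n C E)"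

definition correctable_max :: "nat \<Rightarrow> nat \<Rightarrow> nat \<Rightarrow> nat \<Rightarrow> nat \<Rightarrow> (nat \<times> nat) set \<Rightarrow> bool" where
  "correctable_max m n a b h E \<longleftrightarrow> correctable m n a b h E \<and>
     \<not> (\<exists>E2. E \<subset> E2 \<and> correctable m n a b h E2)"

definition MR_code :: "('b, 'm) ring_scheme \<Rightarrow> nat \<Rightarrow> nat \<Rightarrow> nat \<Rightarrow> nat \<Rightarrow> nat
    \<Rightarrow> (nat \<times> nat \<Rightarrow> 'b) set \<Rightarrow> bool" where
  "MR_code R m n a b h C \<longleftrightarrow> topo_code R m n a b h C \<and>
     (\<forall>E. correctable m n a b h E \<longrightarrow> corrects m n C E)"

definition restrict_code :: "('b, 'm) ring_scheme \<Rightarrow> 'p set \<Rightarrow> ('p \<Rightarrow> 'b) set \<Rightarrow> ('p \<Rightarrow> 'b) set" where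
  "restrict_code R S C = (\<lambda>c. (\<lambda>p. if p \<in> S then c p else \<zero>\<^bsub>R\<^esub>)) ` C"

definition weight :: "('b, 'm) ring_scheme \<Rightarrow> 'p set \<Rightarrow> ('p \<Rightarrow> 'b) \<Rightarrow> nat" where
  "weight R S c = card {p \<in> S. c p \<noteq> \<zero>\<^bsub>R\<^esub>}"

definition min_dist_is :: "('b, 'm) ring_scheme \<Rightarrow> 'p set \<Rightarrow> ('p \<Rightarrow> 'b) set \<Rightarrow> nat \<Rightarrow> bool" where
  "min_dist_is R S C d \<longleftrightarrow>
     (\<forall>c\<in>C. c \<noteq> (\<lambda>p. \<zero>\<^bsub>R\<^esub>) \<longrightarrow> weight R S c \<ge> d) \<and>
     (\<exists>c\<in>C. c \<noteq> (\<lambda>p. \<zero>\<^bsub>R\<^esub>) \<and> weight R S c = d)"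

definition MDS_code :: "('b, 'm) ring_scheme \<Rightarrow> 'p set \<Rightarrow> ('p \<Rightarrow> 'b) set \<Rightarrow> nat \<Rightarrow> nat \<Rightarrow> nat \<Rightarrow> bool" where
  "MDS_code R S C len k d \<longleftrightarrow> lin_code R S C \<and> finite S \<and> card S = len \<and> has_dim R C k \<and>
     min_dist_is R S C d \<and> k \<le> len \<and> d = len - k + 1"

end

(*
  Dimensions over the finite field F_q are measured by cardinality (|C| = q^dim C), so all of the
  linear algebra below is done by counting.

  Let S be the complement of the maximal pattern E' and K = (m - a)(n - b). Inside S lies an
  information set of the K-dimensional tensor product of (m - a)- and (n - b)-dimensional subcodes
  of the column and row codes; its complement is again correctable, so by maximality it is all
  of S and |S| = K. For any h positions F in S, the union of E' and F is correctable with h global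
  parities that read off the coordinates in F. Hence the MR code C is determined by its values on
  S - F for every such F, which gives dim C <= K - h, while C is cut out of a code of dimension at
  least K by h checks, so dim C = K - h. A nonzero codeword of the restriction to S therefore has
  more than h nonzero entries (otherwise its support would fit into some F), and the Singleton
  bound provides one with at most |S| - dim C + 1 = h + 1.
*)
theory Submission
  imports Defs "HOL-Algebra.Multiplicative_Group"
begin

section \<open>Sets of coordinates determining a code\<close>

definition determined_by :: "('p \<Rightarrow> 'b) set \<Rightarrow> 'p set \<Rightarrow> bool" where
  "determined_by C P \<longleftrightarrow> (\<forall>c1\<in>C. \<forall>c2\<in>C. (\<forall>p\<in>P. c1 p = c2 p) \<longrightarrow> c1 = c2)"

definition proj_on :: "('b, 'm) ring_scheme \<Rightarrow> 'p set \<Rightarrow> ('p \<Rightarrow> 'b) \<Rightarrow> 'p \<Rightarrow> 'b" where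
  "proj_on R P c = (\<lambda>p. if p \<in> P then c p else \<zero>\<^bsub>R\<^esub>)"

lemma determined_byD:
  "determined_by C P \<Longrightarrow> c1 \<in> C \<Longrightarrow> c2 \<in> C \<Longrightarrow> (\<And>p. p \<in> P \<Longrightarrow> c1 p = c2 p) \<Longrightarrow> c1 = c2"
  unfolding determined_by_def by blast

lemma determined_by_mono:
  "determined_by C P \<Longrightarrow> C' \<subseteq> C \<Longrightarrow> P \<subseteq> P' \<Longrightarrow> determined_by C' P'"
  unfolding determined_by_def by blast

lemma determined_by_vecs:
  assumes "C \<subseteq> vecs R X"
  shows "determined_by C X"
proof (unfold determined_by_def, intro ballI impI ext)
  fix c1 c2 p assume "c1 \<in> C" "c2 \<in> C" "\<forall>p\<in>X. c1 p = c2 p"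
  moreover from assms \<open>c1 \<in> C\<close> \<open>c2 \<in> C\<close> have "c1 \<in> vecs R X" "c2 \<in> vecs R X" by blast+
  ultimately show "c1 p = c2 p" unfolding vecs_def by (cases "p \<in> X") auto
qed

lemma corrects_iff_determined_by: "corrects m n C E \<longleftrightarrow> determined_by C (grid m n - E)"
  unfolding corrects_def determined_by_def by simp

lemma restrict_code_eq_image: "restrict_code R S C = proj_on R S ` C"
  unfolding restrict_code_def proj_on_def by simp

lemma proj_on_eq_iff: "proj_on R P x = proj_on R P y \<longleftrightarrow> (\<forall>p\<in>P. x p = y p)"
  unfolding proj_on_def by (auto simp: fun_eq_iff)

lemma inj_on_proj_on_iff: "inj_on (proj_on R P) C \<longleftrightarrow> determined_by C P"
  unfolding inj_on_def determined_by_def proj_on_eq_iff by blast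

lemma proj_on_in_vecs: "(\<And>p. p \<in> P \<Longrightarrow> c p \<in> carrier R) \<Longrightarrow> proj_on R P c \<in> vecs R P"
  unfolding proj_on_def vecs_def by simp

lemma proj_on_vecs: "v \<in> vecs R P \<Longrightarrow> proj_on R P v = v"
  unfolding proj_on_def vecs_def by auto

lemma vecs_eq_image_PiE: "vecs R P = proj_on R P ` (P \<rightarrow>\<^sub>E carrier R)"
proof
  show "vecs R P \<subseteq> proj_on R P ` (P \<rightarrow>\<^sub>E carrier R)"
  proof
    fix v assume v: "v \<in> vecs R P"
    then have "v = proj_on R P (restrict v P)" and "restrict v P \<in> P \<rightarrow>\<^sub>E carrier R"
      unfolding vecs_def proj_on_def by auto
    then show "v \<in> proj_on R P ` (P \<rightarrow>\<^sub>E carrier R)" by blast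
  qed
qed (auto intro: proj_on_in_vecs)

lemma
  assumes "finite P" "finite (carrier R)"
  shows card_vecs: "card (vecs R P) = card (carrier R) ^ card P"
    and finite_vecs: "finite (vecs R P)"
proof -
  have "inj_on (proj_on R P) (P \<rightarrow>\<^sub>E carrier R)"
    by (auto simp: inj_on_def proj_on_eq_iff intro: PiE_ext)
  then show "card (vecs R P) = card (carrier R) ^ card P"
    using assms by (simp add: vecs_eq_image_PiE card_image card_PiE)
  show "finite (vecs R P)"
    using assms by (simp add: vecs_eq_image_PiE finite_PiE)
qed

section \<open>Linear codes over a finite field\<close>

definition has_unit_vectors :: "('b, 'm) ring_scheme \<Rightarrow> ('p \<Rightarrow> 'b) set \<Rightarrow> 'p set \<Rightarrow> bool" where
  "has_unit_vectors R D P \<longleftrightarrow>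
     (\<forall>p\<in>P. \<exists>d\<in>D. d p = \<one>\<^bsub>R\<^esub> \<and> (\<forall>p'\<in>P. p' \<noteq> p \<longrightarrow> d p' = \<zero>\<^bsub>R\<^esub>))"

definition information_set :: "('b, 'm) ring_scheme \<Rightarrow> ('p \<Rightarrow> 'b) set \<Rightarrow> 'p set \<Rightarrow> bool" where
  "information_set R C P \<longleftrightarrow> determined_by C P \<and> has_unit_vectors R C P"

lemma lin_code_zero: "lin_code R X C \<Longrightarrow> (\<lambda>p. \<zero>\<^bsub>R\<^esub>) \<in> C"
  unfolding lin_code_def by blast

lemma lin_code_add: "lin_code R X C \<Longrightarrow> x \<in> C \<Longrightarrow> y \<in> C \<Longrightarrow> (\<lambda>p. x p \<oplus>\<^bsub>R\<^esub> y p) \<in> C"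
  unfolding lin_code_def by blast

lemma lin_code_smult: "lin_code R X C \<Longrightarrow> a \<in> carrier R \<Longrightarrow> x \<in> C \<Longrightarrow> (\<lambda>p. a \<otimes>\<^bsub>R\<^esub> x p) \<in> C"
  unfolding lin_code_def by blast

lemma lin_code_determined_by: "lin_code R X C \<Longrightarrow> determined_by C X"
  unfolding lin_code_def by (blast intro: determined_by_vecs)

context ring
begin

lemma vecs_carrier: "v \<in> vecs R X \<Longrightarrow> v p \<in> carrier R"
  unfolding vecs_def by (cases "p \<in> X") auto

lemma lin_code_carrier: "lin_code R X C \<Longrightarrow> c \<in> C \<Longrightarrow> c p \<in> carrier R"
  unfolding lin_code_def by (blast intro: vecs_carrier)

lemma
  assumes C: "lin_code R X C" and "determined_by C P" "finite P" "finite (carrier R)"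
  shows card_le_if_determined_by: "card C \<le> card (carrier R) ^ card P"
    and finite_if_determined_by: "finite C"
proof -
  have inj: "inj_on (proj_on R P) C" and sub: "proj_on R P ` C \<subseteq> vecs R P"
    using assms(2) lin_code_carrier[OF C] by (auto simp: inj_on_proj_on_iff intro: proj_on_in_vecs)
  then show "finite C"
    using finite_vecs[OF assms(3,4)] finite_imageD finite_subset by metis
  have "card C = card (proj_on R P ` C)" using inj by (simp add: card_image)
  also have "\<dots> \<le> card (vecs R P)" using sub finite_vecs[OF assms(3,4)] by (rule card_mono[rotated])
  finally show "card C \<le> card (carrier R) ^ card P" using card_vecs[OF assms(3,4)] by simp
qed

lemma lin_code_vanishing: "lin_code R X C \<Longrightarrow> lin_code R X {x \<in> C. \<forall>j\<in>J. x j = \<zero>}"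
  unfolding lin_code_def by (auto simp: vecs_def)

lemma lin_code_minus: "lin_code R X C \<Longrightarrow> x \<in> C \<Longrightarrow> y \<in> C \<Longrightarrow> (\<lambda>p. x p \<ominus> y p) \<in> C"
  using lin_code_add[of R X C x "\<lambda>p. \<ominus> \<one> \<otimes> y p"] lin_code_smult[of R X C "\<ominus> \<one>" y]
  by (simp add: lin_code_carrier minus_eq l_minus)

lemma lin_code_combine:
  "lin_code R X C \<Longrightarrow> v \<in> C \<Longrightarrow> s \<in> C \<Longrightarrow> c \<in> carrier R \<Longrightarrow> (\<lambda>p. c \<otimes> s p \<oplus> v p) \<in> C"
  using lin_code_add[of R X C "\<lambda>p. c \<otimes> s p" v] lin_code_smult[of R X C c s] by simp

lemma lin_span_subset_lin_code:
  assumes "lin_code R X C" "D \<subseteq> C"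
  shows "lin_span R D \<subseteq> C"
proof
  fix z assume "z \<in> lin_span R D"
  then show "z \<in> C"
    by induction (use assms in \<open>auto intro: lin_code_zero lin_code_combine\<close>)
qed

lemma vecs_subset_proj_on_lin_span:
  assumes "has_unit_vectors R D P" "finite P"
  shows "vecs R P \<subseteq> proj_on R P ` lin_span R D"
proof
  fix v assume v: "v \<in> vecs R P"
  have vc: "v p \<in> carrier R" for p using v by (rule vecs_carrier)
  have "Q \<subseteq> P \<Longrightarrow> \<exists>z\<in>lin_span R D. proj_on R P z = proj_on R Q v" for Q
  proof (induction Q rule: infinite_finite_induct)
    case (infinite Q)
    then show ?case using \<open>finite P\<close> finite_subset by blast
  next
    case empty
    show ?case by (rule bexI[OF _ lin_span.zero]) (simp add: proj_on_def)
  next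
    case (insert x Q)
    then obtain z where z: "z \<in> lin_span R D" "proj_on R P z = proj_on R Q v" by blast
    obtain d where d: "d \<in> D" "d x = \<one>" "\<forall>p\<in>P. p \<noteq> x \<longrightarrow> d p = \<zero>"
      using assms(1) insert.prems unfolding has_unit_vectors_def by blast
    have zP: "z p = (if p \<in> Q then v p else \<zero>)" if "p \<in> P" for p
      using that fun_cong[OF z(2), of p] by (simp add: proj_on_def)
    have "proj_on R P (\<lambda>p. v x \<otimes> d p \<oplus> z p) = proj_on R (insert x Q) v"
    proof
      fix p
      show "proj_on R P (\<lambda>p. v x \<otimes> d p \<oplus> z p) p = proj_on R (insert x Q) v p"
      proof (cases "p \<in> P")
        case True
        then have "z p \<in> carrier R" using zP[of p] vc by simp
        with True show ?thesis
          using insert.prems insert.hyps(2) vc d(2,3) zP[of p] by (cases "p = x") (simp_all add: proj_on_def)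
      next
        case False
        then show ?thesis using insert.prems by (auto simp: proj_on_def)
      qed
    qed
    then show ?case using lin_span.step[OF z(1) d(1) vc] by blast
  qed
  from this[of P] obtain z where "z \<in> lin_span R D" "proj_on R P z = v"
    using proj_on_vecs[OF v] by auto
  then show "v \<in> proj_on R P ` lin_span R D" by blast
qed

lemma card_lin_span_ge:
  assumes "has_unit_vectors R D P" "finite P" "finite (carrier R)" "finite (lin_span R D)"
  shows "card (carrier R) ^ card P \<le> card (lin_span R D)"
proof -
  have "card (vecs R P) \<le> card (proj_on R P ` lin_span R D)"
    using vecs_subset_proj_on_lin_span[OF assms(1,2)] assms(4) by (simp add: card_mono)
  also have "\<dots> \<le> card (lin_span R D)" using assms(4) by (rule card_image_le)
  finally show ?thesis using card_vecs[OF assms(2,3)] by simp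
qed

end

context field
begin

lemma one_less_card_carrier: "finite (carrier R) \<Longrightarrow> 1 < card (carrier R)"
  using card_mono[of "carrier R" "{\<zero>, \<one>}"] by simp

lemma card_information_set:
  assumes C: "lin_code R X C" and "information_set R C P" "finite P" "finite (carrier R)"
  shows "card C = card (carrier R) ^ card P"
proof -
  have det: "determined_by C P" and unit: "has_unit_vectors R C P"
    using assms(2) unfolding information_set_def by auto
  have fin: "finite C" and le: "card C \<le> card (carrier R) ^ card P"
    using card_le_if_determined_by[OF C det assms(3,4)] finite_if_determined_by[OF C det assms(3,4)]
    by auto
  have span: "lin_span R C \<subseteq> C" by (rule lin_span_subset_lin_code[OF C order_refl])
  have "card (carrier R) ^ card P \<le> card (lin_span R C)"
    using card_lin_span_ge[OF unit assms(3,4)] span fin finite_subset by blast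
  also have "\<dots> \<le> card C" by (rule card_mono[OF fin span])
  finally show ?thesis using le by simp
qed

lemma has_dim_iff_card_information_set:
  assumes "lin_code R X C" "information_set R C P" "finite P" "finite (carrier R)"
  shows "has_dim R C k \<longleftrightarrow> card P = k"
  using card_information_set[OF assms] one_less_card_carrier[OF assms(4)]
  unfolding has_dim_def by simp

lemma not_determined_by_if_card_less:
  assumes C: "lin_code R X C" and "finite (carrier R)" "has_dim R C k" "finite G" "card G < k"
  shows "\<not> determined_by C G"
proof
  assume "determined_by C G"
  from card_le_if_determined_by[OF C this \<open>finite G\<close> assms(2)]
  have "card C \<le> card (carrier R) ^ card G" .
  moreover have "card (carrier R) ^ card G < card (carrier R) ^ k"
    using one_less_card_carrier[OF assms(2)] assms(5) by simp
  ultimately show False using assms(3) unfolding has_dim_def by simp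
qed

lemma unit_vector_if_minimal:
  assumes C: "lin_code R X C" and "determined_by C P" "\<not> determined_by C (P - {p})" "p \<in> P"
  shows "\<exists>d\<in>C. d p = \<one> \<and> (\<forall>p'\<in>P. p' \<noteq> p \<longrightarrow> d p' = \<zero>)"
proof -
  obtain c1 c2 where c: "c1 \<in> C" "c2 \<in> C" "\<forall>q\<in>P - {p}. c1 q = c2 q" "c1 \<noteq> c2"
    using assms(3) unfolding determined_by_def by blast
  define e where "e = (\<lambda>q. c1 q \<ominus> c2 q)"
  have e: "e \<in> C" unfolding e_def using lin_code_minus[OF C c(1,2)] .
  have e_zero_iff: "e q = \<zero> \<longleftrightarrow> c1 q = c2 q" for q
    unfolding e_def using lin_code_carrier[OF C] c(1,2) by simp
  have "e p \<noteq> \<zero>"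
  proof
    assume "e p = \<zero>"
    then have "e = (\<lambda>q. \<zero>)"
      using determined_byD[OF assms(2) e lin_code_zero[OF C]] c(3) e_zero_iff by blast
    then show False using c(4) e_zero_iff by (metis ext)
  qed
  then have unit: "e p \<in> Units R" using lin_code_carrier[OF C e] field_Units by blast
  show ?thesis
  proof (intro bexI conjI ballI impI)
    show "(\<lambda>q. inv (e p) \<otimes> e q) \<in> C" using lin_code_smult[OF C _ e] unit by simp
    show "inv (e p) \<otimes> e p = \<one>" using unit by simp
    fix p' assume "p' \<in> P" "p' \<noteq> p"
    then have "e p' = \<zero>" using c(3) e_zero_iff by simp
    then show "inv (e p) \<otimes> e p' = \<zero>" using unit by simp
  qed
qed

lemma exists_information_set:
  assumes "lin_code R X C" "finite Y" "determined_by C Y"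
  shows "\<exists>P\<subseteq>Y. information_set R C P"
proof -
  let ?A = "{P. P \<subseteq> Y \<and> determined_by C P}"
  have "finite ?A" using finite_Collect_subsets[OF assms(2)] by (rule finite_subset[rotated]) blast
  then obtain P where "P \<in> ?A" and min: "\<forall>P'\<in>?A. P' \<subseteq> P \<longrightarrow> P = P'"
    using finite_has_minimal2[of ?A Y] assms(3) by blast
  then have P: "P \<subseteq> Y" "determined_by C P" by auto
  have "\<not> determined_by C (P - {p})" if "p \<in> P" for p
    using min P(1) that by blast
  then have "has_unit_vectors R C P"
    using unit_vector_if_minimal[OF assms(1) P(2)] unfolding has_unit_vectors_def by blast
  then show ?thesis using P unfolding information_set_def by blast
qed

lemma information_set_vanishing_subcode:
  assumes "information_set R C P" "J \<subseteq> P"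
  shows "information_set R {x \<in> C. \<forall>j\<in>J. x j = \<zero>} (P - J)"
  unfolding information_set_def
proof
  let ?C' = "{x \<in> C. \<forall>j\<in>J. x j = \<zero>}"
  have det: "determined_by C P" and unit: "has_unit_vectors R C P"
    using assms(1) unfolding information_set_def by auto
  show "determined_by ?C' (P - J)"
  proof (unfold determined_by_def, intro ballI impI)
    fix x y assume x: "x \<in> ?C'" and y: "y \<in> ?C'" and agree: "\<forall>p\<in>P - J. x p = y p"
    show "x = y"
    proof (rule determined_byD[OF det])
      show "x \<in> C" "y \<in> C" using x y by simp_all
      fix p assume "p \<in> P"
      then show "x p = y p" using x y agree by (cases "p \<in> J") simp_all
    qed
  qed
  show "has_unit_vectors R ?C' (P - J)"
    unfolding has_unit_vectors_def
  proof
    fix p assume p: "p \<in> P - J"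
    then obtain d where d: "d \<in> C" "d p = \<one>" "\<forall>p'\<in>P. p' \<noteq> p \<longrightarrow> d p' = \<zero>"
      using unit unfolding has_unit_vectors_def by blast
    have "d j = \<zero>" if "j \<in> J" for j
      using d(3) that assms(2) p by (metis Diff_iff subsetD)
    with d show "\<exists>d\<in>?C'. d p = \<one> \<and> (\<forall>p'\<in>P - J. p' \<noteq> p \<longrightarrow> d p' = \<zero>)"
      by blast
  qed
qed

lemma exists_subcode_of_dim:
  assumes C: "lin_code R X C" and "finite X" "finite (carrier R)" "has_dim R C k" "r \<le> k"
  obtains C' where "C' \<subseteq> C" "lin_code R X C'" "has_dim R C' r"
proof -
  obtain P where P: "P \<subseteq> X" "information_set R C P"
    using exists_information_set[OF C \<open>finite X\<close> lin_code_determined_by[OF C]] by blast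
  have "finite P" using P(1) \<open>finite X\<close> finite_subset by blast
  then have "card P = k"
    using has_dim_iff_card_information_set[OF C P(2)] assms(3,4) by simp
  then obtain J where J: "J \<subseteq> P" "card J = k - r"
    using obtain_subset_with_card_n[of "k - r" P] by auto
  let ?C' = "{x \<in> C. \<forall>j\<in>J. x j = \<zero>}"
  have C': "lin_code R X ?C'" by (rule lin_code_vanishing[OF C])
  have "card (P - J) = r"
    using J \<open>card P = k\<close> \<open>finite P\<close> assms(5) by (simp add: card_Diff_subset finite_subset)
  then have dim: "has_dim R ?C' r"
    using has_dim_iff_card_information_set[OF C' information_set_vanishing_subcode[OF P(2) J(1)] _ assms(3)]
      \<open>finite P\<close> by simp
  show ?thesis by (rule that[OF _ C' dim]) blast
qed

end

section \<open>Tensor product codes\<close>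

definition outer_products ::
    "('b, 'm) ring_scheme \<Rightarrow> ('i \<Rightarrow> 'b) set \<Rightarrow> ('j \<Rightarrow> 'b) set \<Rightarrow> ('i \<times> 'j \<Rightarrow> 'b) set" where
  "outer_products R C1 C2 = {(\<lambda>(i, j). x i \<otimes>\<^bsub>R\<^esub> y j) | x y. x \<in> C1 \<and> y \<in> C2}"

lemma tensor_code_eq_lin_span: "tensor_code R C1 C2 = lin_span R (outer_products R C1 C2)"
  unfolding tensor_code_def outer_products_def ..

lemma lin_span_mono:
  assumes "D \<subseteq> D'"
  shows "lin_span R D \<subseteq> lin_span R D'"
proof
  fix x assume "x \<in> lin_span R D"
  then show "x \<in> lin_span R D'"
  proof induction
    case (step v s c)
    then show ?case using assms lin_span.step[OF step.IH _ step.hyps(3)] by blast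
  qed (rule lin_span.zero)
qed

lemma tensor_code_mono:
  "C1' \<subseteq> C1 \<Longrightarrow> C2' \<subseteq> C2 \<Longrightarrow> tensor_code R C1' C2' \<subseteq> tensor_code R C1 C2"
  unfolding tensor_code_eq_lin_span outer_products_def by (rule lin_span_mono) blast

context ring
begin

lemma lin_span_base:
  assumes "s \<in> D" "\<And>p. s p \<in> carrier R"
  shows "s \<in> lin_span R D"
proof -
  have "(\<lambda>p. \<one> \<otimes> s p \<oplus> \<zero>) \<in> lin_span R D"
    by (rule lin_span.step[OF lin_span.zero]) (use assms in simp_all)
  then show ?thesis using assms(2) by simp
qed

lemma lin_span_subset_vecs:
  assumes "D \<subseteq> vecs R X"
  shows "lin_span R D \<subseteq> vecs R X"
proof
  fix z assume "z \<in> lin_span R D"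
  then show "z \<in> vecs R X"
  proof induction
    case (step v s c)
    have "s \<in> vecs R X" using step.hyps(2) assms by blast
    then have "s p \<in> carrier R" "v p \<in> carrier R" for p
      using step.IH by (auto intro: vecs_carrier)
    then show ?case using \<open>s \<in> vecs R X\<close> step.IH step.hyps(3) unfolding vecs_def by auto
  qed (simp add: vecs_def)
qed

lemma lin_span_add:
  assumes D: "D \<subseteq> vecs R X" and "x \<in> lin_span R D" "y \<in> lin_span R D"
  shows "(\<lambda>p. x p \<oplus> y p) \<in> lin_span R D"
  using assms(2)
proof induction
  case zero
  have "\<And>p. y p \<in> carrier R" using assms(3) lin_span_subset_vecs[OF D] by (blast intro: vecs_carrier)
  then show ?case using assms(3) by simp
next
  case (step v s c)
  have "\<And>p. s p \<in> carrier R" "\<And>p. v p \<in> carrier R" "\<And>p. y p \<in> carrier R"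
    using step assms lin_span_subset_vecs[OF D] by (auto intro: vecs_carrier)
  then have "(\<lambda>p. c \<otimes> s p \<oplus> v p \<oplus> y p) = (\<lambda>p. c \<otimes> s p \<oplus> (v p \<oplus> y p))"
    using step.hyps(3) by (simp add: a_assoc)
  then show ?case using lin_span.step[OF step.IH step.hyps(2,3)] by simp
qed

lemma lin_span_smult:
  assumes D: "D \<subseteq> vecs R X" and "x \<in> lin_span R D" "a \<in> carrier R"
  shows "(\<lambda>p. a \<otimes> x p) \<in> lin_span R D"
  using assms(2)
proof induction
  case zero
  then show ?case using assms(3) lin_span.zero by simp
next
  case (step v s c)
  have "\<And>p. s p \<in> carrier R" "\<And>p. v p \<in> carrier R"
    using step assms lin_span_subset_vecs[OF D] by (auto intro: vecs_carrier)
  then have "(\<lambda>p. a \<otimes> (c \<otimes> s p \<oplus> v p)) = (\<lambda>p. (a \<otimes> c) \<otimes> s p \<oplus> a \<otimes> v p)"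
    using step.hyps(3) assms(3) by (simp add: r_distr m_assoc)
  then show ?case using lin_span.step[OF step.IH step.hyps(2)] step.hyps(3) assms(3) by simp
qed

lemma lin_code_lin_span: "D \<subseteq> vecs R X \<Longrightarrow> lin_code R X (lin_span R D)"
  unfolding lin_code_def
  by (intro conjI ballI lin_span_subset_vecs lin_span.zero lin_span_add lin_span_smult)

lemma outer_products_subset_vecs:
  assumes "lin_code R X1 C1" "lin_code R X2 C2"
  shows "outer_products R C1 C2 \<subseteq> vecs R (X1 \<times> X2)"
proof
  fix z assume "z \<in> outer_products R C1 C2"
  then obtain x y where z: "z = (\<lambda>(i, j). x i \<otimes> y j)" "x \<in> vecs R X1" "y \<in> vecs R X2"
    using assms unfolding outer_products_def lin_code_def by blast
  moreover have "\<And>i. x i \<in> carrier R" "\<And>j. y j \<in> carrier R"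
    using z(2,3) by (auto intro: vecs_carrier)
  ultimately show "z \<in> vecs R (X1 \<times> X2)"
    unfolding vecs_def by auto
qed

lemma lin_code_tensor_code:
  "lin_code R X1 C1 \<Longrightarrow> lin_code R X2 C2 \<Longrightarrow> lin_code R (X1 \<times> X2) (tensor_code R C1 C2)"
  unfolding tensor_code_eq_lin_span by (intro lin_code_lin_span outer_products_subset_vecs)

end

context cring
begin

lemma tensor_code_slices:
  assumes C1: "lin_code R X1 C1" and C2: "lin_code R X2 C2" and "c \<in> tensor_code R C1 C2"
  shows "(\<lambda>j. c (i, j)) \<in> C2" "(\<lambda>i. c (i, j)) \<in> C1"
proof -
  have "c \<in> lin_span R (outer_products R C1 C2)" using assms(3) by (simp add: tensor_code_eq_lin_span)
  then have "(\<lambda>j. c (i, j)) \<in> C2 \<and> (\<lambda>i. c (i, j)) \<in> C1" for i j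
  proof induction
    case zero
    then show ?case using lin_code_zero[OF C1] lin_code_zero[OF C2] by simp
  next
    case (step v s a)
    obtain x y where s: "s = (\<lambda>(i, j). x i \<otimes> y j)" "x \<in> C1" "y \<in> C2"
      using step.hyps(2) unfolding outer_products_def by blast
    have x: "\<And>i. x i \<in> carrier R" and y: "\<And>j. y j \<in> carrier R"
      using lin_code_carrier[OF C1 s(2)] lin_code_carrier[OF C2 s(3)] by auto
    have "(\<lambda>j. a \<otimes> s (i, j) \<oplus> v (i, j)) = (\<lambda>j. (a \<otimes> x i) \<otimes> y j \<oplus> v (i, j))"
      using s(1) x y step.hyps(3) by (simp add: m_assoc)
    moreover have "(\<lambda>i. a \<otimes> s (i, j) \<oplus> v (i, j)) = (\<lambda>i. (a \<otimes> y j) \<otimes> x i \<oplus> v (i, j))"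
      using s(1) x y step.hyps(3) by (simp add: m_ac)
    ultimately show ?case
      using lin_code_combine[OF C2 _ s(3)] lin_code_combine[OF C1 _ s(2)] step.IH step.hyps(3) x y
      by simp
  qed
  then show "(\<lambda>j. c (i, j)) \<in> C2" "(\<lambda>i. c (i, j)) \<in> C1" by auto
qed

lemma determined_by_tensor_code:
  assumes C1: "lin_code R X1 C1" and C2: "lin_code R X2 C2"
    and I1: "determined_by C1 I1" and I2: "determined_by C2 I2"
  shows "determined_by (tensor_code R C1 C2) (I1 \<times> I2)"
proof (unfold determined_by_def, intro ballI impI)
  fix c1 c2 assume c: "c1 \<in> tensor_code R C1 C2" "c2 \<in> tensor_code R C1 C2"
    and agree: "\<forall>p\<in>I1 \<times> I2. c1 p = c2 p"
  have rows: "(\<lambda>j. c1 (i, j)) = (\<lambda>j. c2 (i, j))" if "i \<in> I1" for i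
    by (rule determined_byD[OF I2 tensor_code_slices(1)[OF C1 C2 c(1)] tensor_code_slices(1)[OF C1 C2 c(2)]])
      (use agree that in simp)
  have cols: "(\<lambda>i. c1 (i, j)) = (\<lambda>i. c2 (i, j))" for j
    by (rule determined_byD[OF I1 tensor_code_slices(2)[OF C1 C2 c(1)] tensor_code_slices(2)[OF C1 C2 c(2)]])
      (use rows in \<open>simp add: fun_eq_iff\<close>)
  show "c1 = c2"
  proof
    fix p show "c1 p = c2 p" using cols[of "snd p"] by (cases p) (simp add: fun_eq_iff)
  qed
qed

lemma has_unit_vectors_tensor_code:
  assumes C1: "lin_code R X1 C1" and C2: "lin_code R X2 C2"
    and P1: "has_unit_vectors R C1 P1" and P2: "has_unit_vectors R C2 P2"
  shows "has_unit_vectors R (tensor_code R C1 C2) (P1 \<times> P2)"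
  unfolding has_unit_vectors_def
proof
  fix pq assume "pq \<in> P1 \<times> P2"
  then obtain p q where pq: "pq = (p, q)" "p \<in> P1" "q \<in> P2" by blast
  obtain x where x: "x \<in> C1" "x p = \<one>" "\<forall>p'\<in>P1. p' \<noteq> p \<longrightarrow> x p' = \<zero>"
    using P1 pq(2) unfolding has_unit_vectors_def by blast
  obtain y where y: "y \<in> C2" "y q = \<one>" "\<forall>q'\<in>P2. q' \<noteq> q \<longrightarrow> y q' = \<zero>"
    using P2 pq(3) unfolding has_unit_vectors_def by blast
  have xc: "\<And>i. x i \<in> carrier R" and yc: "\<And>j. y j \<in> carrier R"
    using lin_code_carrier[OF C1 x(1)] lin_code_carrier[OF C2 y(1)] by auto
  let ?d = "\<lambda>(i, j). x i \<otimes> y j"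
  have "?d \<in> tensor_code R C1 C2"
    unfolding tensor_code_eq_lin_span
    by (rule lin_span_base) (use x(1) y(1) xc yc in \<open>auto simp: outer_products_def\<close>)
  moreover have "?d pq = \<one>" using pq x(2) y(2) by simp
  moreover have "?d p' = \<zero>" if "p' \<in> P1 \<times> P2" "p' \<noteq> pq" for p'
    using that pq x(3) y(3) xc yc by auto
  ultimately show "\<exists>d\<in>tensor_code R C1 C2. d pq = \<one> \<and> (\<forall>p'\<in>P1 \<times> P2. p' \<noteq> pq \<longrightarrow> d p' = \<zero>)"
    by blast
qed

end

context field
begin

lemma has_dim_tensor_code:
  assumes "finite (carrier R)" "finite X1" "finite X2"
    and C1: "lin_code R X1 C1" "has_dim R C1 k1" and C2: "lin_code R X2 C2" "has_dim R C2 k2"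
  shows "has_dim R (tensor_code R C1 C2) (k1 * k2)"
proof -
  obtain P1 where P1: "P1 \<subseteq> X1" "information_set R C1 P1"
    using exists_information_set[OF C1(1) assms(2) lin_code_determined_by[OF C1(1)]] by blast
  obtain P2 where P2: "P2 \<subseteq> X2" "information_set R C2 P2"
    using exists_information_set[OF C2(1) assms(3) lin_code_determined_by[OF C2(1)]] by blast
  have fin: "finite P1" "finite P2" using P1(1) P2(1) assms(2,3) finite_subset by auto
  have "card P1 = k1" "card P2 = k2"
    using has_dim_iff_card_information_set[OF C1(1) P1(2) fin(1) assms(1)]
      has_dim_iff_card_information_set[OF C2(1) P2(2) fin(2) assms(1)] C1(2) C2(2) by auto
  moreover have "information_set R (tensor_code R C1 C2) (P1 \<times> P2)"
    using P1 P2 determined_by_tensor_code[OF C1(1) C2(1)] has_unit_vectors_tensor_code[OF C1(1) C2(1)]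
    unfolding information_set_def by blast
  ultimately show ?thesis
    using has_dim_iff_card_information_set[OF lin_code_tensor_code[OF C1(1) C2(1)]] fin assms(1)
    by (simp add: card_cartesian_product)
qed

end

section \<open>Parity-check kernels\<close>

definition parity_kernel ::
    "('b, 'm) ring_scheme \<Rightarrow> 'p set \<Rightarrow> (nat \<Rightarrow> 'p \<Rightarrow> 'b) \<Rightarrow> nat \<Rightarrow> ('p \<Rightarrow> 'b) set \<Rightarrow> ('p \<Rightarrow> 'b) set" where
  "parity_kernel R X H h T = {c \<in> T. \<forall>i<h. (\<Oplus>\<^bsub>R\<^esub>p\<in>X. H i p \<otimes>\<^bsub>R\<^esub> c p) = \<zero>\<^bsub>R\<^esub>}"

lemma parity_kernel_0 [simp]: "parity_kernel R X H 0 T = T"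
  unfolding parity_kernel_def by simp

lemma card_le_mult_if_card_fibers_le:
  assumes "finite A" "f ` A \<subseteq> B" "finite B" "\<And>a. a \<in> A \<Longrightarrow> card {a' \<in> A. f a' = f a} \<le> K"
  shows "card A \<le> K * card B"
proof -
  have "card A = card (\<Union>b\<in>f ` A. {a \<in> A. f a = b})" by (rule arg_cong[of _ _ card]) blast
  also have "\<dots> \<le> (\<Sum>b\<in>f ` A. card {a \<in> A. f a = b})" by (rule card_UN_le) (use assms(1) in simp)
  also have "\<dots> \<le> (\<Sum>b\<in>f ` A. K)" by (rule sum_mono) (use assms(4) in blast)
  also have "\<dots> \<le> K * card B" using card_mono[OF assms(3,2)] by simp
  finally show ?thesis .
qed

context cring
begin

lemma finsum_mult_add_smult:
  assumes "finite X" "u \<in> X \<rightarrow> carrier R" "x \<in> X \<rightarrow> carrier R" "y \<in> X \<rightarrow> carrier R" "a \<in> carrier R"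
  shows "(\<Oplus>p\<in>X. u p \<otimes> (x p \<oplus> a \<otimes> y p)) = (\<Oplus>p\<in>X. u p \<otimes> x p) \<oplus> a \<otimes> (\<Oplus>p\<in>X. u p \<otimes> y p)"
proof -
  have uxy: "u p \<in> carrier R" "x p \<in> carrier R" "y p \<in> carrier R" if "p \<in> X" for p
    using assms(2-4) that by auto
  have "(\<Oplus>p\<in>X. u p \<otimes> (x p \<oplus> a \<otimes> y p)) = (\<Oplus>p\<in>X. u p \<otimes> x p \<oplus> a \<otimes> (u p \<otimes> y p))"
    by (rule finsum_cong') (use assms(5) uxy in \<open>auto simp: r_distr m_lcomm\<close>)
  also have "\<dots> = (\<Oplus>p\<in>X. u p \<otimes> x p) \<oplus> (\<Oplus>p\<in>X. a \<otimes> (u p \<otimes> y p))"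
    by (rule finsum_addf) (use assms(5) uxy in auto)
  also have "(\<Oplus>p\<in>X. a \<otimes> (u p \<otimes> y p)) = a \<otimes> (\<Oplus>p\<in>X. u p \<otimes> y p)"
    by (rule finsum_rdistr[symmetric]) (use assms(1,5) uxy in auto)
  finally show ?thesis .
qed

lemma lin_code_parity_kernel:
  assumes T: "lin_code R X T" and "finite X" and H: "\<And>i p. i < h \<Longrightarrow> p \<in> X \<Longrightarrow> H i p \<in> carrier R"
  shows "lin_code R X (parity_kernel R X H h T)"
proof -
  have lincomb: "(\<Oplus>p\<in>X. H i p \<otimes> (x p \<oplus> a \<otimes> y p)) = \<zero>"
    if "i < h" "x \<in> parity_kernel R X H h T" "y \<in> parity_kernel R X H h T" "a \<in> carrier R" for i x y a
    using that finsum_mult_add_smult[OF \<open>finite X\<close>, of "H i" x y a] H lin_code_carrier[OF T]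
    unfolding parity_kernel_def by auto
  have zero: "(\<Oplus>p\<in>X. H i p \<otimes> \<zero>) = \<zero>" if "i < h" for i
    using finsum_zero[of X] finsum_cong'[of X X "\<lambda>p. H i p \<otimes> \<zero>" "\<lambda>p. \<zero>"] H that by simp
  show ?thesis
    unfolding lin_code_def
  proof (intro conjI ballI)
    show "parity_kernel R X H h T \<subseteq> vecs R X" using T unfolding lin_code_def parity_kernel_def by blast
    show "(\<lambda>p. \<zero>) \<in> parity_kernel R X H h T"
      using lin_code_zero[OF T] zero unfolding parity_kernel_def by simp
  next
    fix x y assume xy: "x \<in> parity_kernel R X H h T" "y \<in> parity_kernel R X H h T"
    then show "(\<lambda>p. x p \<oplus> y p) \<in> parity_kernel R X H h T"
      using lincomb[OF _ xy one_closed] lin_code_add[OF T] lin_code_carrier[OF T]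
      unfolding parity_kernel_def by auto
  next
    fix a x assume "a \<in> carrier R" "x \<in> parity_kernel R X H h T"
    then show "(\<lambda>p. a \<otimes> x p) \<in> parity_kernel R X H h T"
      using lincomb[of _ "\<lambda>p. \<zero>" x a] lin_code_zero[OF T] zero lin_code_smult[OF T] lin_code_carrier[OF T]
      unfolding parity_kernel_def by auto
  qed
qed

lemma minus_in_parity_kernel:
  assumes T: "lin_code R X T" and "finite X" and H: "\<And>i p. i < h \<Longrightarrow> p \<in> X \<Longrightarrow> H i p \<in> carrier R"
    and "x \<in> T" "y \<in> T" "\<And>i. i < h \<Longrightarrow> (\<Oplus>p\<in>X. H i p \<otimes> x p) = (\<Oplus>p\<in>X. H i p \<otimes> y p)"
  shows "(\<lambda>p. x p \<ominus> y p) \<in> parity_kernel R X H h T"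
proof -
  have "(\<Oplus>p\<in>X. H i p \<otimes> (x p \<ominus> y p)) = \<zero>" if "i < h" for i
  proof -
    have "(\<Oplus>p\<in>X. H i p \<otimes> y p) \<in> carrier R"
      using H that lin_code_carrier[OF T \<open>y \<in> T\<close>] by (auto intro: finsum_closed)
    then show ?thesis
      using finsum_mult_add_smult[OF \<open>finite X\<close>, of "H i" x y "\<ominus> \<one>"] assms that lin_code_carrier[OF T]
      by (simp add: minus_eq l_minus r_neg)
  qed
  then show ?thesis
    using lin_code_minus[OF T assms(4,5)] unfolding parity_kernel_def by blast
qed

lemma card_lin_code_le_parity_kernel:
  assumes "finite (carrier R)" and T: "lin_code R X T" and "finite X"
    and H: "\<And>i p. i < h \<Longrightarrow> p \<in> X \<Longrightarrow> H i p \<in> carrier R"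
  shows "card T \<le> card (parity_kernel R X H h T) * card (carrier R) ^ h"
proof -
  let ?K = "parity_kernel R X H h T"
  define syndrome where "syndrome c = (\<lambda>i\<in>{..<h}. \<Oplus>p\<in>X. H i p \<otimes> c p)" for c
  have "finite T"
    using T finite_vecs[OF \<open>finite X\<close> assms(1)] finite_subset unfolding lin_code_def by blast
  moreover have "syndrome ` T \<subseteq> {..<h} \<rightarrow>\<^sub>E carrier R"
  proof (rule image_subsetI)
    fix c assume "c \<in> T"
    then show "syndrome c \<in> {..<h} \<rightarrow>\<^sub>E carrier R"
      unfolding syndrome_def restrict_PiE_iff using H lin_code_carrier[OF T] by (auto intro!: finsum_closed)
  qed
  \<comment> \<open>subtracting \<open>c0\<close> embeds its syndrome fibre into the kernel\<close>
  moreover have "card {c \<in> T. syndrome c = syndrome c0} \<le> card ?K" if "c0 \<in> T" for c0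
  proof (rule card_inj_on_le)
    show "inj_on (\<lambda>c p. c p \<ominus> c0 p) {c \<in> T. syndrome c = syndrome c0}"
      using lin_code_carrier[OF T] that by (auto simp: inj_on_def fun_eq_iff minus_eq)
    show "(\<lambda>c p. c p \<ominus> c0 p) ` {c \<in> T. syndrome c = syndrome c0} \<subseteq> ?K"
    proof clarify
      fix c assume c: "c \<in> T" "syndrome c = syndrome c0"
      have "(\<Oplus>p\<in>X. H i p \<otimes> c p) = (\<Oplus>p\<in>X. H i p \<otimes> c0 p)" if "i < h" for i
        using fun_cong[OF c(2), of i] that unfolding syndrome_def by simp
      then show "(\<lambda>p. c p \<ominus> c0 p) \<in> ?K"
        using minus_in_parity_kernel[OF T \<open>finite X\<close>, of h H c c0] H c(1) \<open>c0 \<in> T\<close> by blast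
    qed
    show "finite ?K" using \<open>finite T\<close> unfolding parity_kernel_def by simp
  qed
  ultimately show ?thesis
    using card_le_mult_if_card_fibers_le[of T syndrome "{..<h} \<rightarrow>\<^sub>E carrier R"] assms(1)
    by (simp add: card_PiE finite_PiE)
qed

end

context ring
begin

lemma parity_kernel_unit_checks:
  assumes f: "bij_betw f {..<h} F" and "F \<subseteq> X" "finite X" and T: "\<And>c p. c \<in> T \<Longrightarrow> c p \<in> carrier R"
  shows "parity_kernel R X (\<lambda>i p. if p = f i then \<one> else \<zero>) h T = {c \<in> T. \<forall>p\<in>F. c p = \<zero>}"
proof -
  have "(\<Oplus>p\<in>X. (if p = f i then \<one> else \<zero>) \<otimes> c p) = c (f i)" if "c \<in> T" "i < h" for c i
  proof -
    have fi: "f i \<in> X" using f \<open>F \<subseteq> X\<close> that(2) by (auto simp: bij_betw_def)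
    have "(\<Oplus>p\<in>X. (if p = f i then \<one> else \<zero>) \<otimes> c p) = (\<Oplus>p\<in>X. if f i = p then c p else \<zero>)"
      by (rule finsum_cong') (use T[OF that(1)] in auto)
    also have "\<dots> = c (f i)" by (rule finsum_singleton[OF fi \<open>finite X\<close>]) (use T[OF that(1)] in auto)
    finally show ?thesis .
  qed
  moreover have "F = f ` {..<h}" using f by (simp add: bij_betw_def)
  ultimately show ?thesis unfolding parity_kernel_def by auto
qed

end

section \<open>Restrictions that are MDS codes\<close>

context ring
begin

lemma lin_code_image_proj_on:
  assumes C: "lin_code R X C"
  shows "lin_code R S (proj_on R S ` C)"
  unfolding lin_code_def
proof (intro conjI ballI)
  show "proj_on R S ` C \<subseteq> vecs R S"
    using lin_code_carrier[OF C] by (auto intro: proj_on_in_vecs)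
  have "proj_on R S (\<lambda>p. \<zero>) = (\<lambda>p. \<zero>)" by (simp add: proj_on_def)
  then show "(\<lambda>p. \<zero>) \<in> proj_on R S ` C" using lin_code_zero[OF C] by (metis image_eqI)
next
  fix x y assume "x \<in> proj_on R S ` C" "y \<in> proj_on R S ` C"
  then obtain cx cy where c: "cx \<in> C" "cy \<in> C" "x = proj_on R S cx" "y = proj_on R S cy" by blast
  then have "(\<lambda>p. x p \<oplus> y p) = proj_on R S (\<lambda>p. cx p \<oplus> cy p)" by (auto simp: proj_on_def)
  then show "(\<lambda>p. x p \<oplus> y p) \<in> proj_on R S ` C" using lin_code_add[OF C c(1,2)] by blast
next
  fix a x assume "a \<in> carrier R" "x \<in> proj_on R S ` C"
  then obtain cx where c: "cx \<in> C" "x = proj_on R S cx" by blast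
  then have "(\<lambda>p. a \<otimes> x p) = proj_on R S (\<lambda>p. a \<otimes> cx p)"
    using \<open>a \<in> carrier R\<close> by (auto simp: proj_on_def)
  then show "(\<lambda>p. a \<otimes> x p) \<in> proj_on R S ` C" using lin_code_smult[OF C \<open>a \<in> carrier R\<close> c(1)] by blast
qed

lemma weight_proj_on_ge:
  assumes C: "lin_code R X C" and "finite S" "h \<le> card S"
    and det: "\<And>F. F \<subseteq> S \<Longrightarrow> card F = h \<Longrightarrow> determined_by C (S - F)"
    and "c \<in> C" "proj_on R S c \<noteq> (\<lambda>p. \<zero>)"
  shows "h + 1 \<le> weight R S (proj_on R S c)"
proof (rule ccontr)
  let ?Z = "{p \<in> S. proj_on R S c p \<noteq> \<zero>}"
  assume "\<not> h + 1 \<le> weight R S (proj_on R S c)"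
  then have "card ?Z \<le> h" unfolding weight_def by simp
  then obtain F where F: "?Z \<subseteq> F" "F \<subseteq> S" "card F = h"
    using exists_subset_between[of ?Z h S] assms(2,3) by auto
  have "c = (\<lambda>p. \<zero>)"
    by (rule determined_byD[OF det[OF F(2,3)] \<open>c \<in> C\<close> lin_code_zero[OF C]])
      (use F(1) in \<open>auto simp: proj_on_def\<close>)
  then show False using assms(6) by (simp add: proj_on_def)
qed

end

context field
begin

text \<open>The Singleton bound, attained by a codeword vanishing on \<open>k - 1\<close> positions of \<open>S\<close>.\<close>

lemma exists_weight_proj_on_le:
  assumes C: "lin_code R X C" and "finite (carrier R)" "finite S"
    and "has_dim R C k" "0 < k" "k \<le> card S" and det: "determined_by C S"
  shows "\<exists>c\<in>C. proj_on R S c \<noteq> (\<lambda>p. \<zero>) \<and> weight R S (proj_on R S c) \<le> card S - k + 1"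
proof -
  have "k - 1 \<le> card S" using assms(6) by simp
  then obtain G where G: "G \<subseteq> S" "card G = k - 1" by (rule obtain_subset_with_card_n)
  have "finite G" using G(1) \<open>finite S\<close> finite_subset by blast
  have "\<not> determined_by C G"
    by (rule not_determined_by_if_card_less[OF C assms(2,4) \<open>finite G\<close>]) (use G(2) assms(5) in simp)
  then obtain c1 c2 where c: "c1 \<in> C" "c2 \<in> C" "\<forall>p\<in>G. c1 p = c2 p" "c1 \<noteq> c2"
    unfolding determined_by_def by blast
  define d where "d = (\<lambda>p. c1 p \<ominus> c2 p)"
  have d: "d \<in> C" unfolding d_def by (rule lin_code_minus[OF C c(1,2)])
  have d_zero_iff: "d p = \<zero> \<longleftrightarrow> c1 p = c2 p" for p
    unfolding d_def using lin_code_carrier[OF C] c(1,2) by simp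
  have "proj_on R S d \<noteq> (\<lambda>p. \<zero>)"
  proof
    assume zero: "proj_on R S d = (\<lambda>p. \<zero>)"
    have "d p = \<zero>" if "p \<in> S" for p
      using fun_cong[OF zero, of p] that by (simp add: proj_on_def)
    then have "d = (\<lambda>p. \<zero>)" by (rule determined_byD[OF det d lin_code_zero[OF C]])
    then have "c1 = c2" using d_zero_iff by (simp add: fun_eq_iff)
    then show False using c(4) by contradiction
  qed
  moreover have "weight R S (proj_on R S d) \<le> card S - k + 1"
  proof -
    have "{p \<in> S. proj_on R S d p \<noteq> \<zero>} \<subseteq> S - G"
      using c(3) d_zero_iff unfolding proj_on_def by auto
    then have "weight R S (proj_on R S d) \<le> card (S - G)"
      unfolding weight_def by (rule card_mono[OF finite_Diff[OF \<open>finite S\<close>]])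
    also have "card (S - G) = card S - k + 1"
      using card_Diff_subset[OF \<open>finite G\<close> G(1)] G(2) assms(5,6) by simp
    finally show ?thesis .
  qed
  ultimately show ?thesis using d by blast
qed

lemma MDS_code_restrict_code:
  assumes C: "lin_code R X C" and "finite (carrier R)" "finite S"
    and "has_dim R C k" "0 < k" "k + h = card S"
    and det: "\<And>F. F \<subseteq> S \<Longrightarrow> card F = h \<Longrightarrow> determined_by C (S - F)"
  shows "MDS_code R S (restrict_code R S C) (card S) k (h + 1)"
proof -
  obtain F where "F \<subseteq> S" "card F = h" using obtain_subset_with_card_n[of h S] assms(6) by auto
  then have det_S: "determined_by C S" using det determined_by_mono by blast
  have "inj_on (proj_on R S) C" using det_S by (simp add: inj_on_proj_on_iff)
  then have "has_dim R (proj_on R S ` C) k"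
    using \<open>has_dim R C k\<close> unfolding has_dim_def by (simp add: card_image)
  moreover have "min_dist_is R S (proj_on R S ` C) (h + 1)"
  proof -
    have ge: "h + 1 \<le> weight R S (proj_on R S c)" if "c \<in> C" "proj_on R S c \<noteq> (\<lambda>p. \<zero>)" for c
      using weight_proj_on_ge[OF C \<open>finite S\<close> _ det that] assms(6) by simp
    obtain c where c: "c \<in> C" "proj_on R S c \<noteq> (\<lambda>p. \<zero>)" "weight R S (proj_on R S c) \<le> h + 1"
      using exists_weight_proj_on_le[OF C assms(2,3,4,5) _ det_S] assms(6) by auto
    have "\<forall>r\<in>proj_on R S ` C. r \<noteq> (\<lambda>p. \<zero>) \<longrightarrow> h + 1 \<le> weight R S r" using ge by blast
    moreover have "weight R S (proj_on R S c) = h + 1" using c ge[OF c(1,2)] by simp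
    ultimately show ?thesis unfolding min_dist_is_def using c(1,2) by blast
  qed
  ultimately show ?thesis
    unfolding MDS_code_def restrict_code_eq_image
    using lin_code_image_proj_on[OF C] assms(3,6) by simp
qed

end

section \<open>Codes for the topology and their correctable patterns\<close>

lemma topo_codeI:
  assumes "lin_code R {1..m} Ccol" "m - a \<le> k1" "has_dim R Ccol k1"
    and "lin_code R {1..n} Crow" "n - b \<le> k2" "has_dim R Crow k2"
    and "\<And>i p. i < h \<Longrightarrow> p \<in> grid m n \<Longrightarrow> H i p \<in> carrier R"
  shows "topo_code R m n a b h (parity_kernel R (grid m n) H h (tensor_code R Ccol Crow))"
  unfolding topo_code_def parity_kernel_def
  by (rule exI[of _ Ccol], rule exI[of _ Crow], rule exI[of _ H]) (use assms in blast)

lemma topo_codeE: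
  assumes "topo_code R m n a b h C"
  obtains Ccol Crow H k1 k2 where
    "lin_code R {1..m} Ccol" "m - a \<le> k1" "has_dim R Ccol k1"
    "lin_code R {1..n} Crow" "n - b \<le> k2" "has_dim R Crow k2"
    "\<forall>i<h. \<forall>p\<in>grid m n. H i p \<in> carrier R"
    "C = parity_kernel R (grid m n) H h (tensor_code R Ccol Crow)"
proof -
  obtain Ccol Crow H k1 k2 where
    "lin_code R {1..m} Ccol" "m - a \<le> k1" "has_dim R Ccol k1"
    "lin_code R {1..n} Crow" "n - b \<le> k2" "has_dim R Crow k2"
    "\<forall>i<h. \<forall>p\<in>grid m n. H i p \<in> carrier R"
    "C = parity_kernel R (grid m n) H h (tensor_code R Ccol Crow)"
    using assms unfolding topo_code_def parity_kernel_def by blast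
  then show thesis by (rule that)
qed

lemma finite_grid: "finite (grid m n)"
  unfolding grid_def by simp

lemma correctable_0I:
  fixes F :: "nat ring"
  assumes "field F" "finite (carrier F)"
    and "lin_code F {1..m} C1" "m - a \<le> k1" "has_dim F C1 k1"
    and "lin_code F {1..n} C2" "n - b \<le> k2" "has_dim F C2 k2"
    and "determined_by (tensor_code F C1 C2) (grid m n - E)" "E \<subseteq> grid m n"
  shows "correctable m n a b 0 E"
proof -
  have "topo_code F m n a b 0 (tensor_code F C1 C2)"
    using topo_codeI[OF assms(3-8), of 0] by simp
  then show ?thesis
    using assms unfolding correctable_def corrects_iff_determined_by by blast
qed

lemma correctable_0E:
  assumes "correctable m n a b 0 E"
  obtains F :: "nat ring" and C1 C2 k1 k2 where "field F" "finite (carrier F)"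
    "lin_code F {1..m} C1" "m - a \<le> k1" "has_dim F C1 k1"
    "lin_code F {1..n} C2" "n - b \<le> k2" "has_dim F C2 k2"
    "determined_by (tensor_code F C1 C2) (grid m n - E)" "E \<subseteq> grid m n"
proof -
  obtain F :: "nat ring" and C where F: "field F" "finite (carrier F)" "topo_code F m n a b 0 C"
    and C: "determined_by C (grid m n - E)" and "E \<subseteq> grid m n"
    using assms unfolding correctable_def corrects_iff_determined_by by blast
  from F(3) obtain C1 C2 H k1 k2 where
    "lin_code F {1..m} C1" "m - a \<le> k1" "has_dim F C1 k1"
    "lin_code F {1..n} C2" "n - b \<le> k2" "has_dim F C2 k2"
    "C = parity_kernel F (grid m n) H 0 (tensor_code F C1 C2)"
    by (rule topo_codeE)
  with F C \<open>E \<subseteq> grid m n\<close> show thesis using that by simp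
qed

lemma correctable_Un_unit_checks:
  assumes "correctable m n a b 0 E" "F \<subseteq> grid m n - E" "card F = h"
  shows "correctable m n a b h (E \<union> F)"
proof -
  obtain F0 :: "nat ring" and C1 C2 k1 k2 where F0: "field F0" "finite (carrier F0)"
    and C1: "lin_code F0 {1..m} C1" "m - a \<le> k1" "has_dim F0 C1 k1"
    and C2: "lin_code F0 {1..n} C2" "n - b \<le> k2" "has_dim F0 C2 k2"
    and det: "determined_by (tensor_code F0 C1 C2) (grid m n - E)" and "E \<subseteq> grid m n"
    using assms(1) by (rule correctable_0E)
  interpret F0: field F0 by (rule F0(1))
  let ?T = "tensor_code F0 C1 C2"
  have T: "lin_code F0 (grid m n) ?T" unfolding grid_def by (rule F0.lin_code_tensor_code[OF C1(1) C2(1)])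
  have "finite F" using assms(2) finite_grid finite_subset by blast
  then obtain f where f: "bij_betw f {..<h} F"
    using ex_bij_betw_nat_finite[of F] assms(3) by (auto simp: lessThan_atLeast0)
  \<comment> \<open>the global parities read off the coordinates in \<open>F\<close>\<close>
  define H where "H = (\<lambda>(i :: nat) p. if p = f i then \<one>\<^bsub>F0\<^esub> else \<zero>\<^bsub>F0\<^esub>)"
  define C where "C = parity_kernel F0 (grid m n) H h ?T"
  have C_eq: "C = {c \<in> ?T. \<forall>p\<in>F. c p = \<zero>\<^bsub>F0\<^esub>}"
    unfolding C_def H_def using assms(2) finite_grid F0.lin_code_carrier[OF T]
    by (intro F0.parity_kernel_unit_checks[OF f]) auto
  have "topo_code F0 m n a b h C"
    unfolding C_def H_def by (rule topo_codeI[OF C1 C2]) simp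
  moreover have "determined_by C (grid m n - (E \<union> F))"
  proof (unfold determined_by_def, intro ballI impI)
    fix c1 c2 assume c: "c1 \<in> C" "c2 \<in> C" and agree: "\<forall>p\<in>grid m n - (E \<union> F). c1 p = c2 p"
    have "c1 p = c2 p" if "p \<in> grid m n - E" for p
      using that c agree unfolding C_eq by (cases "p \<in> F") auto
    then show "c1 = c2" using determined_byD[OF det] c unfolding C_eq by blast
  qed
  ultimately show ?thesis
    using F0 assms(2) \<open>E \<subseteq> grid m n\<close> unfolding correctable_def corrects_iff_determined_by by blast
qed

context field
begin

lemma lin_code_topo_code:
  assumes "topo_code R m n a b h C"
  shows "lin_code R (grid m n) C"
proof -
  obtain Ccol Crow H k1 k2 where
    "lin_code R {1..m} Ccol" "m - a \<le> k1" "has_dim R Ccol k1"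
    "lin_code R {1..n} Crow" "n - b \<le> k2" "has_dim R Crow k2"
    and H: "\<forall>i<h. \<forall>p\<in>grid m n. H i p \<in> carrier R"
    and C: "C = parity_kernel R (grid m n) H h (tensor_code R Ccol Crow)"
    using assms by (rule topo_codeE)
  then have "lin_code R (grid m n) (tensor_code R Ccol Crow)"
    unfolding grid_def by (intro lin_code_tensor_code)
  then show ?thesis unfolding C using lin_code_parity_kernel[OF _ finite_grid] H by blast
qed

lemma card_topo_code_ge:
  assumes "finite (carrier R)" "topo_code R m n a b h C"
  shows "card (carrier R) ^ ((m - a) * (n - b)) \<le> card C * card (carrier R) ^ h"
proof -
  obtain Ccol Crow H k1 k2 where
    Ccol: "lin_code R {1..m} Ccol" "m - a \<le> k1" "has_dim R Ccol k1"
    and Crow: "lin_code R {1..n} Crow" "n - b \<le> k2" "has_dim R Crow k2"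
    and H: "\<forall>i<h. \<forall>p\<in>grid m n. H i p \<in> carrier R"
    and C: "C = parity_kernel R (grid m n) H h (tensor_code R Ccol Crow)"
    using assms(2) by (rule topo_codeE)
  have T: "lin_code R (grid m n) (tensor_code R Ccol Crow)"
    unfolding grid_def by (rule lin_code_tensor_code[OF Ccol(1) Crow(1)])
  have "card (carrier R) ^ ((m - a) * (n - b)) \<le> card (carrier R) ^ (k1 * k2)"
    using one_less_card_carrier[OF assms(1)] Ccol(2) Crow(2) by (intro power_increasing mult_le_mono) auto
  also have "\<dots> = card (tensor_code R Ccol Crow)"
    using has_dim_tensor_code[OF assms(1) _ _ Ccol(1,3) Crow(1,3)] unfolding has_dim_def by simp
  also have "\<dots> \<le> card C * card (carrier R) ^ h"
    unfolding C using card_lin_code_le_parity_kernel[OF assms(1) T finite_grid] H by blast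
  finally show ?thesis .
qed

lemma dim_topo_code_determined_by:
  assumes "finite (carrier R)" "topo_code R m n a b h C" "has_dim R C k"
    and "finite S" "card S = (m - a) * (n - b)" "F \<subseteq> S" "card F = h" "determined_by C (S - F)"
  shows "k + h = (m - a) * (n - b)"
proof -
  let ?q = "card (carrier R)" and ?K = "(m - a) * (n - b)"
  have q: "1 < ?q" by (rule one_less_card_carrier[OF assms(1)])
  have "finite F" using assms(4,6) finite_subset by blast
  then have "card (S - F) = ?K - h" using card_Diff_subset[OF _ assms(6)] assms(5,7) by simp
  then have "?q ^ k \<le> ?q ^ (?K - h)"
    using card_le_if_determined_by[OF lin_code_topo_code[OF assms(2)] assms(8) finite_Diff[OF assms(4)] assms(1)]
      assms(3)
    unfolding has_dim_def by simp
  then have "k \<le> ?K - h" by (rule power_le_imp_le_exp[OF q])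
  moreover have "?q ^ ?K \<le> ?q ^ (k + h)"
    using card_topo_code_ge[OF assms(1,2)] assms(3) unfolding has_dim_def by (simp add: power_add)
  then have "?K \<le> k + h" by (rule power_le_imp_le_exp[OF q])
  moreover have "h \<le> ?K" using card_mono[OF assms(4,6)] assms(5,7) by simp
  ultimately show ?thesis by linarith
qed

end

lemma exists_correctable_complement:
  assumes "correctable m n a b 0 E"
  obtains P where "P \<subseteq> grid m n - E" "card P = (m - a) * (n - b)" "correctable m n a b 0 (grid m n - P)"
proof -
  obtain F0 :: "nat ring" and C1 C2 k1 k2 where F0: "field F0" "finite (carrier F0)"
    and C1: "lin_code F0 {1..m} C1" "m - a \<le> k1" "has_dim F0 C1 k1"
    and C2: "lin_code F0 {1..n} C2" "n - b \<le> k2" "has_dim F0 C2 k2"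
    and det: "determined_by (tensor_code F0 C1 C2) (grid m n - E)"
    using assms by (rule correctable_0E)
  interpret F0: field F0 by (rule F0(1))
  obtain C1' where C1': "C1' \<subseteq> C1" "lin_code F0 {1..m} C1'" "has_dim F0 C1' (m - a)"
    by (rule F0.exists_subcode_of_dim[OF C1(1) _ F0(2) C1(3,2)]) simp
  obtain C2' where C2': "C2' \<subseteq> C2" "lin_code F0 {1..n} C2'" "has_dim F0 C2' (n - b)"
    by (rule F0.exists_subcode_of_dim[OF C2(1) _ F0(2) C2(3,2)]) simp
  let ?T' = "tensor_code F0 C1' C2'"
  have T': "lin_code F0 (grid m n) ?T'"
    unfolding grid_def by (rule F0.lin_code_tensor_code[OF C1'(2) C2'(2)])
  have "determined_by ?T' (grid m n - E)"
    by (rule determined_by_mono[OF det tensor_code_mono[OF C1'(1) C2'(1)] order_refl])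
  \<comment> \<open>an information set of the subcode \<open>?T'\<close> is the complement of a correctable pattern\<close>
  then obtain P where P: "P \<subseteq> grid m n - E" "information_set F0 ?T' P"
    using F0.exists_information_set[OF T' finite_Diff[OF finite_grid]] by blast
  have "finite P" using P(1) finite_grid finite_subset by blast
  then have "card P = (m - a) * (n - b)"
    using F0.has_dim_iff_card_information_set[OF T' P(2) _ F0(2)]
      F0.has_dim_tensor_code[OF F0(2) _ _ C1'(2,3) C2'(2,3)] by simp
  moreover have "correctable m n a b 0 (grid m n - P)"
  proof (rule correctable_0I[OF F0 C1'(2) order_refl C1'(3) C2'(2) order_refl C2'(3)])
    have "grid m n - (grid m n - P) = P" using P(1) by blast
    then show "determined_by ?T' (grid m n - (grid m n - P))"
      using P(2) unfolding information_set_def by simp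
  qed blast
  ultimately show thesis using that P(1) by blast
qed

lemma card_complement_correctable_max:
  assumes "correctable_max m n a b 0 E"
  shows "card (grid m n - E) = (m - a) * (n - b)"
proof -
  have E: "correctable m n a b 0 E" "E \<subseteq> grid m n"
    and max: "\<And>E2. E \<subset> E2 \<Longrightarrow> \<not> correctable m n a b 0 E2"
    using assms unfolding correctable_max_def correctable_def by auto
  obtain P where P: "P \<subseteq> grid m n - E" "card P = (m - a) * (n - b)" "correctable m n a b 0 (grid m n - P)"
    using exists_correctable_complement[OF E(1)] by blast
  have "P = grid m n - E"
  proof (rule ccontr)
    assume "P \<noteq> grid m n - E"
    moreover have "E \<subseteq> grid m n - P" using P(1) E(2) by blast
    moreover have "grid m n - (grid m n - E) = E" using E(2) by (simp add: double_diff)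
    ultimately have "E \<subset> grid m n - P" using P(1) by auto
    then show False using max P(3) by blast
  qed
  then show ?thesis using P(2) by simp
qed

lemma MR_code_determined_by:
  assumes "MR_code R m n a b h C" "correctable m n a b 0 E" "F \<subseteq> grid m n - E" "card F = h"
  shows "determined_by C (grid m n - E - F)"
proof -
  have "grid m n - E - F = grid m n - (E \<union> F)" by blast
  then show ?thesis
    using correctable_Un_unit_checks[OF assms(2-4)] assms(1)
    unfolding MR_code_def corrects_iff_determined_by by simp
qed

theorem corollary1:
  fixes R :: "'b ring" and m n a b h k :: nat
    and E' :: "(nat \<times> nat) set" and C :: "(nat \<times> nat \<Rightarrow> 'b) set"
  assumes "field R" and "finite (carrier R)"
    and "a < m" and "b < n"
    and "h \<le> (m - a) * (n - b) - max (m - a) (n - b)"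
    and "correctable_max m n a b 0 E'"
    and "MR_code R m n a b h C"
    and "has_dim R C k"
  shows "MDS_code R (grid m n - E') (restrict_code R (grid m n - E') C) (m * n - card E') k (h + 1)"
proof -
  interpret field R by fact
  let ?S = "grid m n - E'"
  have E': "correctable m n a b 0 E'" "E' \<subseteq> grid m n"
    using assms(6) unfolding correctable_max_def correctable_def by auto
  have card_S: "card ?S = (m - a) * (n - b)" by (rule card_complement_correctable_max[OF assms(6)])
  have "m - a \<le> (m - a) * (n - b)" "n - b \<le> (m - a) * (n - b)" using assms(3,4) by simp_all
  \<comment> \<open>the bound on \<open>h\<close> is only needed in this weakened form\<close>
  then have "h < (m - a) * (n - b)" using assms(3-5) by linarith
  then obtain F where "F \<subseteq> ?S" "card F = h" using obtain_subset_with_card_n[of h ?S] card_S by auto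
  have C: "topo_code R m n a b h C" using assms(7) unfolding MR_code_def by blast
  have det: "\<And>F. F \<subseteq> ?S \<Longrightarrow> card F = h \<Longrightarrow> determined_by C (?S - F)"
    using MR_code_determined_by[OF assms(7) E'(1)] by blast
  have "k + h = (m - a) * (n - b)"
    using dim_topo_code_determined_by[OF assms(2) C assms(8) _ card_S \<open>F \<subseteq> ?S\<close> \<open>card F = h\<close>]
      det[OF \<open>F \<subseteq> ?S\<close> \<open>card F = h\<close>] finite_grid by blast
  then have "MDS_code R ?S (restrict_code R ?S C) (card ?S) k (h + 1)"
    using MDS_code_restrict_code[OF lin_code_topo_code[OF C] assms(2) _ assms(8) _ _ det] finite_grid card_S
      \<open>h < (m - a) * (n - b)\<close> by simp
  moreover have "card ?S = m * n - card E'"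
    using card_Diff_subset[OF finite_subset[OF E'(2) finite_grid] E'(2)] by (simp add: grid_def)
  ultimately show ?thesis by simp
qed

end
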